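(* Let $U\subseteq\widetilde{\mathbb C}$ be sharply open, $z_0\in U$ and $f\in\mathcal{GH}(U)$. Assume $f(z_0)=0$ and that there exists $n\in\mathbb N_{>0}$ with $f^{(n)}(z_0)\neq0$. Then there exist $L\subseteq_0 I$ and $r\in\widetilde{\mathbb R}_{>0}$ such that for every $z\in B_r(z_0)$ with $|z-z_0|>0$, the restriction $f(z)|_L$ is invertible.
   Context: Fix $I=(0,1]$ and a gauge $\rho=(\rho_\varepsilon)_{\varepsilon\in I}$ with $\rho_\varepsilon\in I$ and $\rho_\varepsilon\to0$ as $\varepsilon\to0$. "$\forall^0\varepsilon$" means "for all sufficiently small $\varepsilon\in I$". A net $(x_\varepsilon)\in\mathbb C^I$ is $\rho$-moderate ($(x_\varepsilon)\in\mathbb C_\rho$) if $\exists N\in\mathbb N\,\forall^0\varepsilon:|x_\varepsilon|\le\rho_\varepsilon^{-N}$, and $\rho$-negligible if $\forall q\in\mathbb N\,\forall^0\varepsilon:|x_\varepsilon|\le\rho_\varepsilon^q$. $\widetilde{\mathbb C}:=\mathbb C_\rho/\{\text{negligible nets}\}$ with classes $[x_\varepsilon]$; $\widetilde{\mathbb R}\subseteq\widetilde{\mathbb C}$ consists of classes of real moderate nets; $|[z_\varepsilon]|:=[|z_\varepsilon|]$. On $\widetilde{\mathbb R}$: $[x_\varepsilon]\le[y_\varepsilon]$ iff $x_\varepsilon\le y_\varepsilon+z_\varepsilon$ $\forall^0\varepsilon$ for some negligible $(z_\varepsilon)$; $x<y$ iff $\exists m\,\forall^0\varepsilon:y_\varepsilon-x_\varepsilon>\rho_\varepsilon^m$;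 $\widetilde{\mathbb R}_{>0}:=\{x:x>0\}$. The sharp topology on $\widetilde{\mathbb C}$ is generated by $B_r(c):=\{z:|z-c|<r\}$, $r\in\widetilde{\mathbb R}_{>0}$. $L\subseteq_0 I$ means $L\subseteq I$ and $0$ is an accumulation point of $L$; for $x=[x_\varepsilon]\in\widetilde{\mathbb C}$, "$x|_L$ is invertible" means $\exists m\in\mathbb N$ with $|x_\varepsilon|>\rho_\varepsilon^m$ for all sufficiently small $\varepsilon\in L$. Generalized holomorphic functions: for $U\subseteq\widetilde{\mathbb C}$ sharply open, $f\in\mathcal{GH}(U)$ means $f:U\to\widetilde{\mathbb C}$ and there exist open sets $\Omega_\varepsilon\subseteq\mathbb C$ and holomorphic $f_\varepsilon:\Omega_\varepsilon\to\mathbb C$ such that for every $z\in U$ and every representative $z=[z_\varepsilon]$: $z_\varepsilon\in\Omega_\varepsilon$ $\forall^0\varepsilon$, $f(z)=[f_\varepsilon(z_\varepsilon)]$, and $(f_\varepsilon^{(k)}(z_\varepsilon))\in\mathbb C_\rho$ for all $k\in\mathbb N$; $f^{(k)}(z):=[f^{(k)}_\varepsilon(z_\varepsilon)]$. *)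

theory Defs
  imports "HOL-Analysis.Analysis"
begin

text \<open>Nets are functions real \<Rightarrow> complex; only their values on I = (0,1] near 0 matter.
  "for all sufficiently small eps" is the filter at_right 0.
  Generalized numbers are equivalence classes (sets of moderate nets).\<close>

definition gauge :: "(real \<Rightarrow> real) \<Rightarrow> bool" where
  "gauge rho \<longleftrightarrow> (\<forall>e\<in>{0<..1}. rho e \<in> {0<..1}) \<and> (rho \<longlongrightarrow> 0) (at_right 0)"

definition moderate :: "(real \<Rightarrow> real) \<Rightarrow> (real \<Rightarrow> complex) \<Rightarrow> bool" where
  "moderate rho x \<longleftrightarrow> (\<exists>N::nat. eventually (\<lambda>e. norm (x e) \<le> inverse (rho e ^ N)) (at_right 0))"

definition negligible :: "(real \<Rightarrow> real) \<Rightarrow> (real \<Rightarrow> complex) \<Rightarrow> bool" where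
  "negligible rho x \<longleftrightarrow> (\<forall>q::nat. eventually (\<lambda>e. norm (x e) \<le> rho e ^ q) (at_right 0))"

definition gclass :: "(real \<Rightarrow> real) \<Rightarrow> (real \<Rightarrow> complex) \<Rightarrow> (real \<Rightarrow> complex) set" where
  "gclass rho x = {y. moderate rho y \<and> negligible rho (\<lambda>e. y e - x e)}"

definition Ctilde :: "(real \<Rightarrow> real) \<Rightarrow> (real \<Rightarrow> complex) set set" where
  "Ctilde rho = {gclass rho x | x. moderate rho x}"

definition Rtilde :: "(real \<Rightarrow> real) \<Rightarrow> (real \<Rightarrow> complex) set set" where
  "Rtilde rho = {gclass rho x | x. moderate rho x \<and> (\<forall>e. x e \<in> \<real>)}"

definition rep :: "(real \<Rightarrow> complex) set \<Rightarrow> (real \<Rightarrow> complex)" where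
  "rep z = (SOME x. x \<in> z)"

definition gzero :: "(real \<Rightarrow> real) \<Rightarrow> (real \<Rightarrow> complex) set" where
  "gzero rho = gclass rho (\<lambda>e. 0)"

definition gminus :: "(real \<Rightarrow> real) \<Rightarrow> (real \<Rightarrow> complex) set \<Rightarrow> (real \<Rightarrow> complex) set \<Rightarrow> (real \<Rightarrow> complex) set" where
  "gminus rho z c = gclass rho (\<lambda>e. rep z e - rep c e)"

definition gabs :: "(real \<Rightarrow> real) \<Rightarrow> (real \<Rightarrow> complex) set \<Rightarrow> (real \<Rightarrow> complex) set" where
  "gabs rho z = gclass rho (\<lambda>e. complex_of_real (cmod (rep z e)))"

definition glt :: "(real \<Rightarrow> real) \<Rightarrow> (real \<Rightarrow> complex) set \<Rightarrow> (real \<Rightarrow> complex) set \<Rightarrow> bool" where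
  "glt rho x y \<longleftrightarrow> (\<exists>xe\<in>x. \<exists>ye\<in>y. (\<forall>e. xe e \<in> \<real> \<and> ye e \<in> \<real>) \<and>
     (\<exists>m::nat. eventually (\<lambda>e. Re (ye e) - Re (xe e) > rho e ^ m) (at_right 0)))"

definition Rpos :: "(real \<Rightarrow> real) \<Rightarrow> (real \<Rightarrow> complex) set set" where
  "Rpos rho = {r \<in> Rtilde rho. glt rho (gzero rho) r}"

definition gball :: "(real \<Rightarrow> real) \<Rightarrow> (real \<Rightarrow> complex) set \<Rightarrow> (real \<Rightarrow> complex) set \<Rightarrow> (real \<Rightarrow> complex) set set" where
  "gball rho r c = {z \<in> Ctilde rho. glt rho (gabs rho (gminus rho z c)) r}"

definition sharply_open :: "(real \<Rightarrow> real) \<Rightarrow> (real \<Rightarrow> complex) set set \<Rightarrow> bool" where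
  "sharply_open rho U \<longleftrightarrow> U \<subseteq> Ctilde rho \<and>
     generate_topology {gball rho r c | r c. r \<in> Rpos rho \<and> c \<in> Ctilde rho} U"

definition GH_rep :: "(real \<Rightarrow> real) \<Rightarrow> (real \<Rightarrow> complex) set set \<Rightarrow> (real \<Rightarrow> complex set) \<Rightarrow>
    (real \<Rightarrow> complex \<Rightarrow> complex) \<Rightarrow> ((real \<Rightarrow> complex) set \<Rightarrow> (real \<Rightarrow> complex) set) \<Rightarrow> bool" where
  "GH_rep rho U Om fe f \<longleftrightarrow>
     (\<forall>e\<in>{0<..1}. open (Om e) \<and> fe e holomorphic_on Om e) \<and>
     (\<forall>z\<in>U. f z \<in> Ctilde rho \<and>
        (\<forall>ze\<in>z. eventually (\<lambda>e. ze e \<in> Om e) (at_right 0) \<and>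
                 f z = gclass rho (\<lambda>e. fe e (ze e)) \<and>
                 (\<forall>k. moderate rho (\<lambda>e. (deriv ^^ k) (fe e) (ze e)))))"

definition gderiv :: "(real \<Rightarrow> real) \<Rightarrow> (real \<Rightarrow> complex \<Rightarrow> complex) \<Rightarrow> nat \<Rightarrow>
    (real \<Rightarrow> complex) set \<Rightarrow> (real \<Rightarrow> complex) set" where
  "gderiv rho fe k z = gclass rho (\<lambda>e. (deriv ^^ k) (fe e) (rep z e))"

definition subset0 :: "real set \<Rightarrow> bool" where
  "subset0 L \<longleftrightarrow> L \<subseteq> {0<..1} \<and> (0::real) islimpt L"

definition invertible_on :: "(real \<Rightarrow> real) \<Rightarrow> real set \<Rightarrow> (real \<Rightarrow> complex) set \<Rightarrow> bool" where
  "invertible_on rho L x \<longleftrightarrow> (\<exists>xe\<in>x. \<exists>m::nat.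
     eventually (\<lambda>e. e \<in> L \<longrightarrow> norm (xe e) > rho e ^ m) (at_right 0))"

end

theory Submission
  imports Defs "HOL-Complex_Analysis.Cauchy_Integral_Formula"
begin

text \<open>Let n be the least order at which the derivative net at a representative x0 of z0 is not
  negligible, and let L be the set of e where its modulus exceeds rho_e^q. A diagonal argument
  upgrades the moderateness of the (n+1)-st derivative at every representative of z0 to a uniform
  bound rho_e^-N on the disc of radius rho_e^N around x0_e. For e in L and
  rho_e^p < |z_e - x0_e| <= rho_e^(q+N+1), Taylor's formula of order n at x0_e is then dominated
  by its leading term: the lower-order terms are negligible and the remainder is at most half the
  leading term. Hence |f_e(z_e)| > rho_e^(q+pn+1).\<close>

section \<open>Moderate and negligible nets\<close>

lemma eventually_at_right_0_in_unit_interval: "\<forall>\<^sub>F e in at_right 0. e \<in> {0<..1::real}"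
  by (simp add: eventually_at_right_field) (auto intro!: exI[of _ 1])

lemma gauge_eventually_less:
  assumes "gauge rho" and "0 < c"
  shows "\<forall>\<^sub>F e in at_right 0. 0 < rho e \<and> rho e < c"
proof -
  have "\<forall>\<^sub>F e in at_right 0. rho e < c"
    using assms order_tendstoD(2)[of rho 0 "at_right 0" c] by (simp add: gauge_def)
  with eventually_at_right_0_in_unit_interval show ?thesis
    by eventually_elim (use assms(1) in \<open>auto simp: gauge_def\<close>)
qed

lemma gauge_eventually_le_half:
  "gauge rho \<Longrightarrow> \<forall>\<^sub>F e in at_right 0. 0 < rho e \<and> rho e \<le> 1/2"
  by (auto elim: eventually_mono[OF gauge_eventually_less[where c = "1/2"]])

lemma power_Suc_le_half:
  fixes r :: real
  assumes "0 < r" "r \<le> 1/2"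
  shows "r ^ Suc m \<le> r ^ m / 2"
  using mult_right_mono[OF assms(2), of "r ^ m"] assms(1) by simp

lemma double_inverse_power_le:
  fixes r :: real
  assumes "0 < r" "r \<le> 1/2"
  shows "2 * inverse (r ^ N) \<le> inverse (r ^ Suc N)"
  using power_Suc_le_half[OF assms, of N] assms(1)
  by (simp add: inverse_eq_divide field_simps)

lemma negligible_mono:
  assumes "negligible rho y" and "\<forall>\<^sub>F e in at_right 0. cmod (x e) \<le> cmod (y e)"
  shows "negligible rho x"
  unfolding negligible_def
proof
  fix q
  show "\<forall>\<^sub>F e in at_right 0. cmod (x e) \<le> rho e ^ q"
    using assms(2) assms(1)[unfolded negligible_def, rule_format, of q] by eventually_elim auto
qed

lemma negligible_zero: "gauge rho \<Longrightarrow> negligible rho (\<lambda>e. 0)"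
  unfolding negligible_def
  by (auto elim: eventually_mono[OF gauge_eventually_le_half])

lemma negligible_add:
  assumes g: "gauge rho" and "negligible rho x" "negligible rho y"
  shows "negligible rho (\<lambda>e. x e + y e)"
  unfolding negligible_def
proof
  fix q
  show "\<forall>\<^sub>F e in at_right 0. cmod (x e + y e) \<le> rho e ^ q"
    using assms(2,3)[unfolded negligible_def, rule_format, of "Suc q"] gauge_eventually_le_half[OF g]
  proof eventually_elim
    case (elim e)
    then have "rho e ^ Suc q \<le> rho e ^ q / 2" by (intro power_Suc_le_half) auto
    then show ?case using elim norm_triangle_ineq[of "x e" "y e"] by linarith
  qed
qed

lemma negligible_uminus: "negligible rho x \<Longrightarrow> negligible rho (\<lambda>e. - x e)"
  by (rule negligible_mono) auto

lemma negligible_diff: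
  "gauge rho \<Longrightarrow> negligible rho x \<Longrightarrow> negligible rho y \<Longrightarrow> negligible rho (\<lambda>e. x e - y e)"
  using negligible_add[of rho x "\<lambda>e. - y e"] negligible_uminus[of rho y] by simp

lemma negligible_sum:
  "gauge rho \<Longrightarrow> (\<And>i. i < (n::nat) \<Longrightarrow> negligible rho (x i)) \<Longrightarrow> negligible rho (\<lambda>e. \<Sum>i<n. x i e)"
  by (induction n) (auto intro: negligible_add negligible_zero)

lemma negligible_norm: "negligible rho x \<Longrightarrow> negligible rho (\<lambda>e. of_real (cmod (x e)))"
  by (rule negligible_mono) auto

lemma moderate_norm: "moderate rho x \<Longrightarrow> moderate rho (\<lambda>e. of_real (cmod (x e)))"
  by (simp add: moderate_def)

lemma moderate_zero: "moderate rho (\<lambda>e. 0)"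
  unfolding moderate_def by (rule exI[of _ 0]) simp

lemma negligible_imp_moderate: "negligible rho x \<Longrightarrow> moderate rho x"
  unfolding negligible_def moderate_def by (rule exI[of _ 0]) (drule spec[of _ 0], simp)

lemma moderate_add:
  assumes g: "gauge rho" and "moderate rho x" "moderate rho y"
  shows "moderate rho (\<lambda>e. x e + y e)"
proof -
  obtain N M where
    N: "\<forall>\<^sub>F e in at_right 0. cmod (x e) \<le> inverse (rho e ^ N)" and
    M: "\<forall>\<^sub>F e in at_right 0. cmod (y e) \<le> inverse (rho e ^ M)"
    using assms(2,3) by (auto simp: moderate_def)
  have "\<forall>\<^sub>F e in at_right 0. cmod (x e + y e) \<le> inverse (rho e ^ Suc (N + M))"
    using N M gauge_eventually_le_half[OF g]
  proof eventually_elim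
    case (elim e)
    then have r: "0 < rho e" "rho e \<le> 1/2" by auto
    have "inverse (rho e ^ N) \<le> inverse (rho e ^ (N + M))" "inverse (rho e ^ M) \<le> inverse (rho e ^ (N + M))"
      using r by (simp_all add: le_imp_inverse_le power_decreasing)
    moreover have "2 * inverse (rho e ^ (N + M)) \<le> inverse (rho e ^ Suc (N + M))"
      using double_inverse_power_le[OF r] .
    moreover have "cmod (x e + y e) \<le> cmod (x e) + cmod (y e)" by (rule norm_triangle_ineq)
    ultimately show ?case using elim by linarith
  qed
  then show ?thesis unfolding moderate_def ..
qed

lemma moderate_diff:
  assumes "gauge rho" and "moderate rho x" "moderate rho y"
  shows "moderate rho (\<lambda>e. x e - y e)"
proof -
  have "moderate rho (\<lambda>e. - y e)" using assms(3) by (simp add: moderate_def)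
  from moderate_add[OF assms(1,2) this] show ?thesis by simp
qed

section \<open>Generalized numbers and sharp balls\<close>

lemma gclass_self: "gauge rho \<Longrightarrow> moderate rho x \<Longrightarrow> x \<in> gclass rho x"
  by (simp add: gclass_def negligible_zero)

lemma gclass_eq_iff:
  assumes g: "gauge rho" and x: "moderate rho x"
  shows "gclass rho x = gclass rho y \<longleftrightarrow> negligible rho (\<lambda>e. x e - y e)"
proof
  assume "gclass rho x = gclass rho y"
  then show "negligible rho (\<lambda>e. x e - y e)" using gclass_self[OF g x] by (simp add: gclass_def)
next
  assume xy: "negligible rho (\<lambda>e. x e - y e)"
  have "negligible rho (\<lambda>e. z e - y e) \<longleftrightarrow> negligible rho (\<lambda>e. z e - x e)" for z
    using negligible_add[OF g _ xy, of "\<lambda>e. z e - x e"] negligible_diff[OF g _ xy, of "\<lambda>e. z e - y e"]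
    by auto
  then show "gclass rho x = gclass rho y" by (auto simp: gclass_def)
qed

lemma Ctilde_moderate: "z \<in> Ctilde rho \<Longrightarrow> x \<in> z \<Longrightarrow> moderate rho x"
  by (auto simp: Ctilde_def gclass_def)

lemma Ctilde_eq_gclass:
  assumes g: "gauge rho" and z: "z \<in> Ctilde rho" and x: "x \<in> z"
  shows "z = gclass rho x"
proof -
  obtain y where y: "moderate rho y" "z = gclass rho y" using z by (auto simp: Ctilde_def)
  then have "negligible rho (\<lambda>e. y e - x e)"
    using x negligible_uminus[of rho "\<lambda>e. x e - y e"] by (simp add: gclass_def)
  with y show ?thesis using gclass_eq_iff[OF g] by blast
qed

lemma Ctilde_rep: assumes g: "gauge rho" and z: "z \<in> Ctilde rho" shows "rep z \<in> z"
proof -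
  obtain x where "moderate rho x" "z = gclass rho x" using z by (auto simp: Ctilde_def)
  then have "x \<in> z" using gclass_self[OF g] by blast
  then show ?thesis unfolding rep_def by (rule someI[where P = "\<lambda>x. x \<in> z"])
qed

lemma Ctilde_mem_iff:
  assumes g: "gauge rho" and z: "z \<in> Ctilde rho" and x: "x \<in> z"
  shows "y \<in> z \<longleftrightarrow> negligible rho (\<lambda>e. y e - x e)"
  using Ctilde_eq_gclass[OF assms] Ctilde_moderate[OF z x] negligible_imp_moderate
    moderate_add[OF g, of x "\<lambda>e. y e - x e"]
  by (auto simp: gclass_def)

lemma Ctilde_negligible_diff:
  assumes "gauge rho" and "z \<in> Ctilde rho" "x \<in> z" "y \<in> z"
  shows "negligible rho (\<lambda>e. x e - y e)"
  using Ctilde_mem_iff[OF assms(1,2,4)] assms(3) by blast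

lemma gabs_gminus:
  assumes g: "gauge rho" and z: "z \<in> Ctilde rho" "x \<in> z" and c: "c \<in> Ctilde rho" "y \<in> c"
  shows "gabs rho (gminus rho z c) = gclass rho (\<lambda>e. of_real (cmod (x e - y e)))"
proof -
  let ?d = "\<lambda>e. rep z e - rep c e"
  have "moderate rho ?d"
    using moderate_diff[OF g] Ctilde_moderate Ctilde_rep[OF g] z c by blast
  then have "gminus rho z c \<in> Ctilde rho" by (auto simp: gminus_def Ctilde_def)
  then have w: "rep (gminus rho z c) \<in> gclass rho ?d"
    using Ctilde_rep[OF g] by (simp add: gminus_def)
  have w_d: "negligible rho (\<lambda>e. rep (gminus rho z c) e - ?d e)" using w by (simp add: gclass_def)
  have z_x: "negligible rho (\<lambda>e. rep z e - x e)" and c_y: "negligible rho (\<lambda>e. rep c e - y e)"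
    using Ctilde_negligible_diff[OF g] Ctilde_rep[OF g] z c by blast+
  have "negligible rho (\<lambda>e. (rep (gminus rho z c) e - ?d e) + ((rep z e - x e) - (rep c e - y e)))"
    using negligible_add[OF g w_d negligible_diff[OF g z_x c_y]] .
  then have "negligible rho (\<lambda>e. rep (gminus rho z c) e - (x e - y e))"
    by (simp add: algebra_simps)
  then have "negligible rho (\<lambda>e. of_real (cmod (rep (gminus rho z c) e)) - of_real (cmod (x e - y e)))"
    by (rule negligible_mono) (simp flip: of_real_diff add: norm_triangle_ineq3)
  moreover have "moderate rho (\<lambda>e. of_real (cmod (rep (gminus rho z c) e)))"
    using w by (intro moderate_norm) (simp add: gclass_def)
  ultimately show ?thesis unfolding gabs_def using gclass_eq_iff[OF g] by blast
qed

lemma glt_gclass_iff: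
  assumes g: "gauge rho" and "moderate rho x" "moderate rho y" and real: "\<forall>e. x e \<in> \<real> \<and> y e \<in> \<real>"
  shows "glt rho (gclass rho x) (gclass rho y) \<longleftrightarrow>
    (\<exists>m::nat. \<forall>\<^sub>F e in at_right 0. Re (y e) - Re (x e) > rho e ^ m)"
proof
  assume "\<exists>m::nat. \<forall>\<^sub>F e in at_right 0. Re (y e) - Re (x e) > rho e ^ m"
  then show "glt rho (gclass rho x) (gclass rho y)"
    unfolding glt_def using gclass_self[OF g] assms by blast
next
  assume "glt rho (gclass rho x) (gclass rho y)"
  then obtain x' y' m where "x' \<in> gclass rho x" "y' \<in> gclass rho y"
    and m: "\<forall>\<^sub>F e in at_right 0. Re (y' e) - Re (x' e) > rho e ^ m"
    unfolding glt_def by blast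
  then have "\<forall>\<^sub>F e in at_right 0. cmod (x' e - x e) \<le> rho e ^ Suc (Suc m)"
    "\<forall>\<^sub>F e in at_right 0. cmod (y' e - y e) \<le> rho e ^ Suc (Suc m)"
    unfolding gclass_def negligible_def mem_Collect_eq by blast+
  then have "\<forall>\<^sub>F e in at_right 0. Re (y e) - Re (x e) > rho e ^ Suc m"
    using m gauge_eventually_le_half[OF g]
  proof eventually_elim
    case (elim e)
    then have "rho e ^ Suc (Suc m) \<le> rho e ^ Suc m / 2" "rho e ^ Suc m \<le> rho e ^ m / 2"
      by (auto intro: power_Suc_le_half)
    moreover have "\<bar>Re (x' e) - Re (x e)\<bar> \<le> cmod (x' e - x e)" "\<bar>Re (y' e) - Re (y e)\<bar> \<le> cmod (y' e - y e)"
      using abs_Re_le_cmod[of "x' e - x e"] abs_Re_le_cmod[of "y' e - y e"] by simp_all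
    ultimately show ?case using elim by linarith
  qed
  then show "\<exists>m::nat. \<forall>\<^sub>F e in at_right 0. Re (y e) - Re (x e) > rho e ^ m" ..
qed

definition rho_power :: "(real \<Rightarrow> real) \<Rightarrow> nat \<Rightarrow> (real \<Rightarrow> complex) set" where
  "rho_power rho k = gclass rho (\<lambda>e. of_real (rho e ^ k))"

lemma moderate_rho_power: "gauge rho \<Longrightarrow> moderate rho (\<lambda>e. of_real (rho e ^ k))"
  unfolding moderate_def
  by (rule exI[of _ 0]) (auto simp: norm_power power_le_one elim: eventually_mono[OF gauge_eventually_le_half])

lemma rho_power_Rpos:
  assumes g: "gauge rho"
  shows "rho_power rho k \<in> Rpos rho"
proof -
  have "\<forall>\<^sub>F e in at_right 0. rho e ^ Suc k < rho e ^ k"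
    using gauge_eventually_le_half[OF g]
    by eventually_elim (use power_Suc_le_half[of _ k] in fastforce)
  then have "\<exists>m. \<forall>\<^sub>F e in at_right 0. rho e ^ m < rho e ^ k" ..
  then have "glt rho (gclass rho (\<lambda>e. 0)) (gclass rho (\<lambda>e. of_real (rho e ^ k)))"
    using glt_gclass_iff[OF g moderate_zero moderate_rho_power[OF g]] by auto
  moreover have "rho_power rho k \<in> Rtilde rho"
    using moderate_rho_power[OF g] by (auto simp: rho_power_def Rtilde_def)
  ultimately show ?thesis by (simp add: Rpos_def gzero_def rho_power_def)
qed

lemma gball_gclass_iff:
  assumes g: "gauge rho" and c: "c \<in> Ctilde rho" "y \<in> c"
    and r: "moderate rho r" "\<forall>e. r e \<in> \<real>"
  shows "z \<in> gball rho (gclass rho r) c \<longleftrightarrow>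
    z \<in> Ctilde rho \<and> (\<exists>m::nat. \<forall>\<^sub>F e in at_right 0. Re (r e) - cmod (rep z e - y e) > rho e ^ m)"
proof (cases "z \<in> Ctilde rho")
  case True
  have "moderate rho (\<lambda>e. rep z e - y e)"
    using moderate_diff[OF g Ctilde_moderate[OF True Ctilde_rep[OF g True]] Ctilde_moderate[OF c]] .
  then have dist: "moderate rho (\<lambda>e. of_real (cmod (rep z e - y e)))" by (rule moderate_norm)
  show ?thesis
    using True gabs_gminus[OF g True Ctilde_rep[OF g True] c] glt_gclass_iff[OF g dist r(1)] r(2)
    by (simp add: gball_def)
qed (simp add: gball_def)

lemma gball_rho_power_iff:
  assumes "gauge rho" and "c \<in> Ctilde rho" "y \<in> c"
  shows "z \<in> gball rho (rho_power rho k) c \<longleftrightarrow>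
    z \<in> Ctilde rho \<and> (\<exists>m::nat. \<forall>\<^sub>F e in at_right 0. rho e ^ k - cmod (rep z e - y e) > rho e ^ m)"
  unfolding rho_power_def using gball_gclass_iff[OF assms moderate_rho_power[OF assms(1)]] by simp

lemma gball_rho_power_antimono:
  assumes g: "gauge rho" and c: "c \<in> Ctilde rho" and "k \<le> k'"
  shows "gball rho (rho_power rho k') c \<subseteq> gball rho (rho_power rho k) c"
proof
  fix z assume "z \<in> gball rho (rho_power rho k') c"
  then obtain m where z: "z \<in> Ctilde rho"
    and m: "\<forall>\<^sub>F e in at_right 0. rho e ^ k' - cmod (rep z e - rep c e) > rho e ^ m"
    using gball_rho_power_iff[OF g c Ctilde_rep[OF g c]] by blast
  have "\<forall>\<^sub>F e in at_right 0. rho e ^ k - cmod (rep z e - rep c e) > rho e ^ m"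
    using m gauge_eventually_le_half[OF g]
  proof eventually_elim
    case (elim e)
    then have "rho e ^ k' \<le> rho e ^ k" using \<open>k \<le> k'\<close> by (simp add: power_decreasing)
    then show ?case using elim by linarith
  qed
  then show "z \<in> gball rho (rho_power rho k) c"
    using gball_rho_power_iff[OF g c Ctilde_rep[OF g c]] z by blast
qed

lemma gball_contains_rho_power_ball:
  assumes g: "gauge rho" and r: "r \<in> Rpos rho" and c: "c \<in> Ctilde rho" and z0: "z0 \<in> gball rho r c"
  obtains k where "gball rho (rho_power rho k) z0 \<subseteq> gball rho r c"
proof -
  obtain r' where r': "moderate rho r'" "\<forall>e. r' e \<in> \<real>" "r = gclass rho r'"
    using r by (auto simp: Rpos_def Rtilde_def)
  have z0C: "z0 \<in> Ctilde rho" using z0 by (simp add: gball_def)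
  note ball_r = gball_gclass_iff[OF g c Ctilde_rep[OF g c] r'(1,2)]
  obtain m where m: "\<forall>\<^sub>F e in at_right 0. Re (r' e) - cmod (rep z0 e - rep c e) > rho e ^ m"
    using z0 ball_r r'(3) by blast
  have "gball rho (rho_power rho (Suc m)) z0 \<subseteq> gball rho r c"
  proof
    fix z assume "z \<in> gball rho (rho_power rho (Suc m)) z0"
    then obtain m' where z: "z \<in> Ctilde rho"
      and m': "\<forall>\<^sub>F e in at_right 0. rho e ^ Suc m - cmod (rep z e - rep z0 e) > rho e ^ m'"
      using gball_rho_power_iff[OF g z0C Ctilde_rep[OF g z0C]] by blast
    have "\<forall>\<^sub>F e in at_right 0. Re (r' e) - cmod (rep z e - rep c e) > rho e ^ Suc m"
      using m m' gauge_eventually_le_half[OF g]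
    proof eventually_elim
      case (elim e)
      have "cmod (rep z e - rep c e) \<le> cmod (rep z e - rep z0 e) + cmod (rep z0 e - rep c e)"
        using norm_triangle_ineq[of "rep z e - rep z0 e" "rep z0 e - rep c e"] by simp
      moreover have "rho e ^ Suc m \<le> rho e ^ m / 2" "rho e ^ m' > 0"
        using elim by (auto intro: power_Suc_le_half)
      ultimately show ?case using elim by linarith
    qed
    then show "z \<in> gball rho r c" using ball_r r'(3) z by blast
  qed
  then show ?thesis by (rule that)
qed

lemma sharply_open_contains_rho_power_ball:
  assumes g: "gauge rho" and U: "sharply_open rho U" and "z0 \<in> U"
  obtains k where "gball rho (rho_power rho k) z0 \<subseteq> U"
proof -
  have "generate_topology {gball rho r c | r c. r \<in> Rpos rho \<and> c \<in> Ctilde rho} U"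
    using U by (simp add: sharply_open_def)
  then have "\<forall>z0 \<in> U \<inter> Ctilde rho. \<exists>k. gball rho (rho_power rho k) z0 \<subseteq> U"
  proof (induction rule: generate_topology.induct)
    case (Int A B)
    show ?case
    proof
      fix z0 assume z0: "z0 \<in> A \<inter> B \<inter> Ctilde rho"
      then obtain k1 k2 where "gball rho (rho_power rho k1) z0 \<subseteq> A" "gball rho (rho_power rho k2) z0 \<subseteq> B"
        using Int.IH by blast
      then have "gball rho (rho_power rho (max k1 k2)) z0 \<subseteq> A \<inter> B"
        using gball_rho_power_antimono[OF g, of z0 k1 "max k1 k2"]
          gball_rho_power_antimono[OF g, of z0 k2 "max k1 k2"] z0 by auto
      then show "\<exists>k. gball rho (rho_power rho k) z0 \<subseteq> A \<inter> B" ..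
    qed
  next
    case (UN K)
    then show ?case by blast
  next
    case (Basis s)
    then obtain r c where s: "s = gball rho r c" "r \<in> Rpos rho" "c \<in> Ctilde rho" by blast
    show ?case
    proof
      fix z0 assume "z0 \<in> s \<inter> Ctilde rho"
      then obtain k where "gball rho (rho_power rho k) z0 \<subseteq> s"
        using gball_contains_rho_power_ball[OF g s(2,3)] s(1) by blast
      then show "\<exists>k. gball rho (rho_power rho k) z0 \<subseteq> s" ..
    qed
  qed auto
  then show ?thesis using that assms(3) U by (auto simp: sharply_open_def)
qed

lemma punctured_rho_power_ball_bounds:
  assumes g: "gauge rho" and z0: "z0 \<in> Ctilde rho" "x0 \<in> z0"
    and z: "z \<in> gball rho (rho_power rho k) z0"
    and punctured: "glt rho (gzero rho) (gabs rho (gminus rho z z0))"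
  obtains p where
    "\<forall>\<^sub>F e in at_right 0. rho e ^ p < cmod (rep z e - x0 e) \<and> cmod (rep z e - x0 e) < rho e ^ k"
proof -
  obtain m where zC: "z \<in> Ctilde rho"
    and m: "\<forall>\<^sub>F e in at_right 0. rho e ^ k - cmod (rep z e - x0 e) > rho e ^ m"
    using z gball_rho_power_iff[OF g z0] by blast
  have "moderate rho (\<lambda>e. rep z e - x0 e)"
    using moderate_diff[OF g Ctilde_moderate[OF zC Ctilde_rep[OF g zC]] Ctilde_moderate[OF z0]] .
  then have "moderate rho (\<lambda>e. of_real (cmod (rep z e - x0 e)))" by (rule moderate_norm)
  note glt_iff = glt_gclass_iff[OF g moderate_zero this]
  have "glt rho (gclass rho (\<lambda>e. 0)) (gclass rho (\<lambda>e. of_real (cmod (rep z e - x0 e))))"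
    using punctured gabs_gminus[OF g zC Ctilde_rep[OF g zC] z0] by (simp add: gzero_def)
  then obtain p where p: "\<forall>\<^sub>F e in at_right 0. cmod (rep z e - x0 e) > rho e ^ p"
    using glt_iff by auto
  have "\<forall>\<^sub>F e in at_right 0. rho e ^ p < cmod (rep z e - x0 e) \<and> cmod (rep z e - x0 e) < rho e ^ k"
    using p m gauge_eventually_le_half[OF g]
  proof eventually_elim
    case (elim e)
    then have "0 < rho e ^ m" by simp
    then show ?case using elim by linarith
  qed
  then show ?thesis by (rule that)
qed

section \<open>Uniform derivative bounds near a point\<close>

lemma GH_repD:
  assumes "GH_rep rho U Om fe f" and "z \<in> U" and "x \<in> z"
  shows "\<forall>\<^sub>F e in at_right 0. x e \<in> Om e" and "f z = gclass rho (\<lambda>e. fe e (x e))"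
    and "moderate rho (\<lambda>e. (deriv ^^ k) (fe e) (x e))"
proof -
  have "\<forall>ze\<in>z. (\<forall>\<^sub>F e in at_right 0. ze e \<in> Om e) \<and> f z = gclass rho (\<lambda>e. fe e (ze e)) \<and>
      (\<forall>k. moderate rho (\<lambda>e. (deriv ^^ k) (fe e) (ze e)))"
    using assms(1,2) unfolding GH_rep_def by simp
  with assms(3) show "\<forall>\<^sub>F e in at_right 0. x e \<in> Om e" "f z = gclass rho (\<lambda>e. fe e (x e))"
    "moderate rho (\<lambda>e. (deriv ^^ k) (fe e) (x e))" by simp_all
qed

lemma frequently_at_right_0_decreasing_seq:
  fixes Q :: "nat \<Rightarrow> real \<Rightarrow> bool"
  assumes "\<And>N. \<exists>\<^sub>F e in at_right 0. Q N e"
  obtains eps where "\<And>N. 0 < eps N" "\<And>N. Q N (eps N)" "\<And>m n. m < n \<Longrightarrow> eps n < eps m"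
    "filterlim eps (at_right 0) sequentially"
proof -
  have witness: "\<exists>e. 0 < e \<and> e < b \<and> Q N e" if "0 < b" for N b
    using assms[of N] that unfolding frequently_def eventually_at_right_field by auto
  define E where "E N b = (SOME e. 0 < e \<and> e < b \<and> Q N e)" for N b
  have E: "0 < E N b \<and> E N b < b \<and> Q N (E N b)" if "0 < b" for N b
    unfolding E_def by (rule someI_ex) (rule witness[OF that])
  define eps where "eps = rec_nat (E 0 1) (\<lambda>N e. E (Suc N) (min e (inverse (real (Suc N)))))"
  have pos: "0 < eps N" for N
    by (induction N) (simp_all add: eps_def E)
  have Suc: "eps (Suc N) < eps N" "eps (Suc N) < inverse (real (Suc N))" for N
    using E[of "min (eps N) (inverse (real (Suc N)))" "Suc N"] pos[of N] by (simp_all add: eps_def)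
  have "Q N (eps N)" for N
    using E[of 1 0] E[of _ N] pos by (cases N) (simp_all add: eps_def)
  moreover have "eps n < eps m" if "m < n" for m n
    using lift_Suc_mono_less[of "\<lambda>n. - eps n", OF _ that] Suc(1) by simp
  moreover have "(\<lambda>N. eps (Suc N)) \<longlonglongrightarrow> 0"
    using pos Suc(2) by (intro tendsto_sandwich[OF _ _ tendsto_const LIMSEQ_inverse_real_of_nat])
      (auto intro: less_imp_le always_eventually)
  then have "eps \<longlonglongrightarrow> 0" by (rule LIMSEQ_imp_Suc)
  then have "filterlim eps (at_right 0) sequentially"
    by (rule tendsto_imp_filterlim_at_right) (simp add: pos always_eventually)
  ultimately show ?thesis using pos that by blast
qed

lemma negligible_modification_along_seq:
  assumes g: "gauge rho" and pos: "\<And>N. 0 < eps N" and dec: "\<And>m n. m < n \<Longrightarrow> eps n < eps m"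
    and off: "\<And>e. e \<notin> range eps \<Longrightarrow> z e = x e"
    and on: "\<And>N. cmod (z (eps N) - x (eps N)) \<le> rho (eps N) ^ N"
  shows "negligible rho (\<lambda>e. z e - x e)"
  unfolding negligible_def
proof
  fix q
  have "\<forall>\<^sub>F e in at_right 0. e < eps q"
    using pos[of q] by (auto simp: eventually_at_right_field)
  then show "\<forall>\<^sub>F e in at_right 0. cmod (z e - x e) \<le> rho e ^ q"
    using gauge_eventually_le_half[OF g]
  proof eventually_elim
    case (elim e)
    show ?case
    proof (cases "e \<in> range eps")
      case True
      then obtain N where N: "e = eps N" by blast
      have "q < N"
      proof (rule ccontr)
        assume "\<not> q < N"
        then have "eps q \<le> eps N" using dec by (cases "N = q") (auto intro: less_imp_le)
        with elim N show False by simp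
      qed
      then have "rho e ^ N \<le> rho e ^ q" using elim by (simp add: power_decreasing)
      then show ?thesis using on[of N] N by simp
    next
      case False
      then show ?thesis using off elim by simp
    qed
  qed
qed

lemma moderate_eventually_bounded_along_seq:
  assumes g: "gauge rho" and "moderate rho x" and lim: "filterlim eps (at_right 0) sequentially"
  shows "\<forall>\<^sub>F N in sequentially. cmod (x (eps N)) \<le> inverse (rho (eps N) ^ N)"
proof -
  obtain M where "\<forall>\<^sub>F e in at_right 0. cmod (x e) \<le> inverse (rho e ^ M)"
    using assms(2) by (auto simp: moderate_def)
  with gauge_eventually_le_half[OF g]
  have "\<forall>\<^sub>F e in at_right 0. 0 < rho e \<and> rho e \<le> 1/2 \<and> cmod (x e) \<le> inverse (rho e ^ M)"
    by eventually_elim blast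
  from eventually_compose_filterlim[OF this lim] eventually_ge_at_top[of M]
  show ?thesis
  proof eventually_elim
    case (elim N)
    then have "inverse (rho (eps N) ^ M) \<le> inverse (rho (eps N) ^ N)"
      by (simp add: le_imp_inverse_le power_decreasing)
    then show ?case using elim by (meson order_trans)
  qed
qed

lemma GH_rep_derivative_bound_near:
  assumes g: "gauge rho" and GH: "GH_rep rho U Om fe f"
    and z0: "z0 \<in> U" "z0 \<in> Ctilde rho" "x0 \<in> z0"
  obtains N where "\<forall>\<^sub>F e in at_right 0. \<forall>w. cmod (w - x0 e) \<le> rho e ^ N \<longrightarrow>
    w \<in> Om e \<and> cmod ((deriv ^^ K) (fe e) w) \<le> inverse (rho e ^ N)"
proof -
  define bad where "bad N e w \<longleftrightarrow> cmod (w - x0 e) \<le> rho e ^ N \<and>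
    \<not> (w \<in> Om e \<and> cmod ((deriv ^^ K) (fe e) w) \<le> inverse (rho e ^ N))" for N e w
  have "\<exists>N. \<forall>\<^sub>F e in at_right 0. \<forall>w. \<not> bad N e w"
  proof (rule ccontr)
    assume "\<nexists>N. \<forall>\<^sub>F e in at_right 0. \<forall>w. \<not> bad N e w"
    then have "\<exists>\<^sub>F e in at_right 0. \<exists>w. bad N e w" for N
      by (simp add: frequently_def)
    then obtain eps where pos: "\<And>N. 0 < eps N" and bad_eps: "\<And>N. \<exists>w. bad N (eps N) w"
      and dec: "\<And>m n. m < n \<Longrightarrow> eps n < eps m" and lim: "filterlim eps (at_right 0) sequentially"
      by (rule frequently_at_right_0_decreasing_seq[where Q = "\<lambda>N e. \<exists>w. bad N e w"]) blast+
    obtain w where w: "\<And>N. bad N (eps N) (w N)" using bad_eps by metis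
    have "inj eps" by (metis dec injI not_less_iff_gr_or_eq)
    \<comment> \<open>Replacing x0 by the bad point w N at each eps N gives another representative of z0,
      at which the derivative net is not moderate.\<close>
    define z where "z e = (if e \<in> range eps then w (inv eps e) else x0 e)" for e
    have z_eps: "z (eps N) = w N" for N using inv_f_f[OF \<open>inj eps\<close>] by (simp add: z_def)
    have "negligible rho (\<lambda>e. z e - x0 e)"
      using g pos dec by (rule negligible_modification_along_seq)
        (use w z_eps in \<open>auto simp: z_def bad_def\<close>)
    then have "z \<in> z0" using Ctilde_mem_iff[OF g z0(2,3)] by blast
    note at_z = GH_repD[OF GH z0(1) this]
    have "\<forall>\<^sub>F N in sequentially. z (eps N) \<in> Om (eps N) \<and>
        cmod ((deriv ^^ K) (fe (eps N)) (z (eps N))) \<le> inverse (rho (eps N) ^ N)"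
      using eventually_compose_filterlim[OF at_z(1) lim]
        moderate_eventually_bounded_along_seq[OF g at_z(3) lim] by eventually_elim blast
    then obtain N where "z (eps N) \<in> Om (eps N)"
      "cmod ((deriv ^^ K) (fe (eps N)) (z (eps N))) \<le> inverse (rho (eps N) ^ N)"
      unfolding eventually_sequentially by blast
    then show False using w[of N] z_eps[of N] unfolding bad_def by auto
  qed
  then obtain N where "\<forall>\<^sub>F e in at_right 0. \<forall>w. \<not> bad N e w" ..
  then show ?thesis by (intro that[of N]) (auto simp: bad_def elim!: eventually_mono)
qed

section \<open>Taylor estimates\<close>

lemma holomorphic_Taylor_norm_lower_bound:
  fixes g :: "complex \<Rightarrow> complex"
  assumes Om: "open Om" "g holomorphic_on Om" "cball x0 R \<subseteq> Om"
    and B: "\<And>w. w \<in> cball x0 R \<Longrightarrow> cmod ((deriv ^^ Suc n) g w) \<le> B"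
    and z: "cmod (z - x0) \<le> R" "cmod (z - x0) \<le> 1"
  shows "cmod ((deriv ^^ n) g x0) * cmod (z - x0) ^ n / fact n - (\<Sum>i<n. cmod ((deriv ^^ i) g x0))
      - B * cmod (z - x0) ^ Suc n / fact n \<le> cmod (g z)"
proof -
  have "0 \<le> R" by (rule order_trans[OF norm_ge_zero z(1)])
  define T where "T i = (deriv ^^ i) g x0 * (z - x0) ^ i / fact i" for i
  have "cmod ((deriv ^^ 0) g z - (\<Sum>i\<le>n. T i)) \<le> B * cmod (z - x0) ^ Suc n / fact n"
    unfolding T_def
  proof (rule complex_Taylor[where S = "cball x0 R"])
    fix i x assume "x \<in> cball x0 R"
    then have "x \<in> Om" using Om(3) by blast
    moreover have "(deriv ^^ i) g holomorphic_on Om" using Om(1,2) holomorphic_higher_deriv by blast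
    ultimately show "((deriv ^^ i) g has_field_derivative (deriv ^^ Suc i) g x) (at x within cball x0 R)"
      using holomorphic_derivI[OF _ Om(1)] by simp
  qed (use B z \<open>0 \<le> R\<close> in \<open>auto simp: dist_norm norm_minus_commute\<close>)
  then have taylor: "cmod (g z - ((\<Sum>i<n. T i) + T n)) \<le> B * cmod (z - x0) ^ Suc n / fact n"
    by (simp add: lessThan_Suc_atMost[symmetric])
  have "cmod (\<Sum>i<n. T i) \<le> (\<Sum>i<n. cmod (T i))" by (rule norm_sum)
  also have "\<dots> \<le> (\<Sum>i<n. cmod ((deriv ^^ i) g x0))"
  proof (rule sum_mono)
    fix i
    have "cmod (z - x0) ^ i \<le> 1" using z(2) by (simp add: power_le_one)
    then have "cmod (z - x0) ^ i \<le> fact i" by (rule order_trans[OF _ fact_ge_1])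
    then have "cmod (z - x0) ^ i / fact i \<le> 1" by (simp add: divide_le_eq)
    then have "cmod ((deriv ^^ i) g x0) * (cmod (z - x0) ^ i / fact i) \<le> cmod ((deriv ^^ i) g x0)"
      by (rule mult_left_le) simp
    then show "cmod (T i) \<le> cmod ((deriv ^^ i) g x0)"
      by (simp add: T_def norm_mult norm_divide norm_power)
  qed
  finally have lower: "cmod (\<Sum>i<n. T i) \<le> (\<Sum>i<n. cmod ((deriv ^^ i) g x0))" .
  have "cmod (T n) \<le> cmod (g z) + cmod (\<Sum>i<n. T i) + cmod (g z - ((\<Sum>i<n. T i) + T n))"
    using norm_triangle_ineq4[of "g z - (\<Sum>i<n. T i)" "g z - ((\<Sum>i<n. T i) + T n)"]
      norm_triangle_ineq4[of "g z" "\<Sum>i<n. T i"] by simp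
  moreover have "cmod (T n) = cmod ((deriv ^^ n) g x0) * cmod (z - x0) ^ n / fact n"
    by (simp add: T_def norm_mult norm_divide norm_power)
  ultimately show ?thesis using taylor lower by linarith
qed

lemma Taylor_bound_gt_power:
  fixes r a s d :: real
  assumes r: "0 < r" "r \<le> 1 / (4 * fact n)"
    and d: "r ^ p < d" "d \<le> r ^ (q + N + 1)"
    and a: "r ^ q < a" and s: "s \<le> r ^ (q + p * n + 2)"
  shows "r ^ (q + p * n + 1) < a * d ^ n / fact n - s - inverse (r ^ N) * d ^ Suc n / fact n"
proof -
  define M where "M = q + p * n"
  have fact: "(1::real) \<le> fact n" by (rule fact_ge_1)
  have "1 / (4 * fact n) \<le> (1/4 :: real)" using fact by (simp add: field_simps)
  then have r4: "r \<le> 1/4" using r(2) by linarith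
  have d0: "0 \<le> d" using d(1) r(1) by (meson less_imp_le order.strict_trans1 zero_le_power)
  have "inverse (r ^ N) * d \<le> inverse (r ^ N) * r ^ (q + N + 1)"
    using d(2) r(1) by simp
  also have "\<dots> = r ^ q * r" using r(1) by (simp add: power_add)
  also have "\<dots> \<le> r ^ q / 2" using r(1) r4 by (simp add: field_simps)
  finally have "inverse (r ^ N) * d * d ^ n \<le> r ^ q / 2 * d ^ n"
    by (rule mult_right_mono) (simp add: d0)
  then have "inverse (r ^ N) * d ^ Suc n \<le> r ^ q * d ^ n / 2" by (simp add: ac_simps)
  then have "inverse (r ^ N) * d ^ Suc n / fact n \<le> r ^ q * d ^ n / 2 / fact n"
    by (rule divide_right_mono) simp
  then have remainder: "inverse (r ^ N) * d ^ Suc n / fact n \<le> r ^ q * d ^ n / (2 * fact n)"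
    by simp
  have "r ^ M \<le> r ^ q * d ^ n"
    using d(1) r(1) by (simp add: M_def power_add power_mult mult_left_mono power_mono)
  moreover have "r ^ q * d ^ n \<le> a * d ^ n" using a d0 by (simp add: mult_right_mono)
  ultimately have leading: "r ^ M / (2 * fact n) \<le> a * d ^ n / fact n - r ^ q * d ^ n / (2 * fact n)"
    by (simp add: field_simps)
  have "2 * r ^ Suc M \<le> r ^ M / (2 * fact n)"
    using r by (simp add: field_simps)
  moreover have "r ^ Suc (Suc M) < r ^ Suc M"
    using r(1) r4 by (intro power_strict_decreasing) auto
  ultimately show ?thesis
    using remainder leading s unfolding M_def by (simp add: numeral_2_eq_2)
qed

lemma holomorphic_norm_gt_power:
  fixes g :: "complex \<Rightarrow> complex"
  assumes Om: "open Om" "g holomorphic_on Om"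
    and B: "\<And>w. cmod (w - x0) \<le> r ^ N \<Longrightarrow> w \<in> Om \<and> cmod ((deriv ^^ Suc n) g w) \<le> inverse (r ^ N)"
    and r: "0 < r" "r \<le> 1 / (4 * fact n)"
    and d: "r ^ p < cmod (z - x0)" "cmod (z - x0) \<le> r ^ (q + N + 1)"
    and a: "r ^ q < cmod ((deriv ^^ n) g x0)"
    and s: "(\<Sum>i<n. cmod ((deriv ^^ i) g x0)) \<le> r ^ (q + p * n + 2)"
  shows "r ^ (q + p * n + 1) < cmod (g z)"
proof -
  have "(1::real) \<le> 4 * fact n" using fact_ge_1[of n, where 'a = real] by linarith
  then have "r * 1 \<le> r * (4 * fact n)" using r(1) by (intro mult_left_mono) auto
  moreover have "r * (4 * fact n) \<le> 1" using r(2) by (simp add: field_simps)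
  ultimately have "r \<le> 1" by simp
  then have "r ^ (q + N + 1) \<le> r ^ N" "r ^ (q + N + 1) \<le> 1"
    using r(1) by (intro power_decreasing power_le_one; simp)+
  then have "cmod (z - x0) \<le> r ^ N" "cmod (z - x0) \<le> 1" using d(2) by linarith+
  moreover have "cball x0 (r ^ N) \<subseteq> Om" "\<And>w. w \<in> cball x0 (r ^ N) \<Longrightarrow>
      cmod ((deriv ^^ Suc n) g w) \<le> inverse (r ^ N)"
    using B by (auto simp: dist_norm norm_minus_commute)
  ultimately have "cmod ((deriv ^^ n) g x0) * cmod (z - x0) ^ n / fact n - (\<Sum>i<n. cmod ((deriv ^^ i) g x0))
      - inverse (r ^ N) * cmod (z - x0) ^ Suc n / fact n \<le> cmod (g z)"
    using holomorphic_Taylor_norm_lower_bound[OF Om] by blast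
  moreover have "r ^ (q + p * n + 1) < cmod ((deriv ^^ n) g x0) * cmod (z - x0) ^ n / fact n
      - (\<Sum>i<n. cmod ((deriv ^^ i) g x0)) - inverse (r ^ N) * cmod (z - x0) ^ Suc n / fact n"
    using Taylor_bound_gt_power[OF r d a s] .
  ultimately show ?thesis by linarith
qed

lemma subset0_not_eventually:
  assumes "\<not> (\<forall>\<^sub>F e in at_right 0. P e)"
  shows "subset0 {e \<in> {0<..1}. \<not> P e}"
  unfolding subset0_def islimpt_approachable
proof (intro conjI allI impI)
  fix d :: real assume "0 < d"
  then obtain e where "0 < e" "e < min d 1" "\<not> P e"
    using assms unfolding eventually_at_right_field by (metis min_less_iff_conj zero_less_one)
  then show "\<exists>e\<in>{e \<in> {0<..1}. \<not> P e}. e \<noteq> 0 \<and> dist e 0 < d" by (intro bexI[of _ e]) auto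
qed auto

lemma GH_rep_least_nonnegligible_derivative:
  assumes g: "gauge rho" and GH: "GH_rep rho U Om fe f" and z0: "z0 \<in> U" "z0 \<in> Ctilde rho"
    and nonzero: "gderiv rho fe m z0 \<noteq> gzero rho"
  obtains n where "\<not> negligible rho (\<lambda>e. (deriv ^^ n) (fe e) (rep z0 e))"
    "\<And>i. i < n \<Longrightarrow> negligible rho (\<lambda>e. (deriv ^^ i) (fe e) (rep z0 e))"
proof -
  define D where "D k = (\<lambda>e. (deriv ^^ k) (fe e) (rep z0 e))" for k
  have "moderate rho (D k)" for k
    using GH_repD[OF GH z0(1) Ctilde_rep[OF g z0(2)]] by (simp add: D_def)
  moreover have "gderiv rho fe m z0 = gclass rho (D m)" by (simp add: gderiv_def D_def)
  ultimately have "\<exists>n. \<not> negligible rho (D n)"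
    using nonzero gclass_eq_iff[OF g] by (auto simp: gzero_def)
  then obtain n where "\<not> negligible rho (D n)" "\<And>i. i < n \<Longrightarrow> negligible rho (D i)"
    unfolding exists_least_iff[of "\<lambda>n. \<not> negligible rho (D n)"] by blast
  then show ?thesis by (intro that) (simp_all add: D_def)
qed

lemma GH_family_norm_gt_power:
  assumes g: "gauge rho"
    and hol: "\<forall>e\<in>{0<..1}. open (Om e) \<and> fe e holomorphic_on Om e"
    and N: "\<forall>\<^sub>F e in at_right 0. \<forall>w. cmod (w - x0 e) \<le> rho e ^ N \<longrightarrow>
      w \<in> Om e \<and> cmod ((deriv ^^ Suc n) (fe e) w) \<le> inverse (rho e ^ N)"
    and lower: "\<And>i. i < n \<Longrightarrow> negligible rho (\<lambda>e. (deriv ^^ i) (fe e) (x0 e))"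
    and dist: "\<forall>\<^sub>F e in at_right 0. rho e ^ p < cmod (x e - x0 e) \<and> cmod (x e - x0 e) \<le> rho e ^ (q + N + 1)"
  shows "\<forall>\<^sub>F e in at_right 0. rho e ^ q < cmod ((deriv ^^ n) (fe e) (x0 e)) \<longrightarrow>
    rho e ^ (q + p * n + 1) < cmod (fe e (x e))"
proof -
  have "negligible rho (\<lambda>e. \<Sum>i<n. of_real (cmod ((deriv ^^ i) (fe e) (x0 e))))"
    by (intro negligible_sum[OF g] negligible_norm lower)
  then have "\<forall>\<^sub>F e in at_right 0.
      cmod (\<Sum>i<n. of_real (cmod ((deriv ^^ i) (fe e) (x0 e)))) \<le> rho e ^ (q + p * n + 2)"
    unfolding negligible_def by (rule spec)
  moreover have "\<forall>\<^sub>F e in at_right 0. open (Om e) \<and> fe e holomorphic_on Om e"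
    using eventually_at_right_0_in_unit_interval by eventually_elim (use hol in blast)
  moreover have "\<forall>\<^sub>F e in at_right 0. 0 < rho e \<and> rho e < 1 / (4 * fact n)"
    by (rule gauge_eventually_less[OF g]) simp
  ultimately show ?thesis using N dist
  proof eventually_elim
    case (elim e)
    have "cmod (\<Sum>i<n. complex_of_real (cmod ((deriv ^^ i) (fe e) (x0 e))))
        = (\<Sum>i<n. cmod ((deriv ^^ i) (fe e) (x0 e)))"
      unfolding of_real_sum[symmetric] norm_of_real by (simp add: sum_nonneg)
    with elim(1) have s: "(\<Sum>i<n. cmod ((deriv ^^ i) (fe e) (x0 e))) \<le> rho e ^ (q + p * n + 2)"
      by simp
    have B: "\<And>w. cmod (w - x0 e) \<le> rho e ^ N \<Longrightarrow>
        w \<in> Om e \<and> cmod ((deriv ^^ Suc n) (fe e) w) \<le> inverse (rho e ^ N)"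
      using elim(4) by blast
    show ?case
    proof
      assume a: "rho e ^ q < cmod ((deriv ^^ n) (fe e) (x0 e))"
      show "rho e ^ (q + p * n + 1) < cmod (fe e (x e))"
        using elim(2,3,5) by (intro holomorphic_norm_gt_power[OF _ _ B _ _ _ _ a s]) auto
    qed
  qed
qed

lemma GH_rep_invertible_on_punctured_ball:
  assumes g: "gauge rho" and GH: "GH_rep rho U Om fe f" and z0: "z0 \<in> Ctilde rho"
    and N: "\<forall>\<^sub>F e in at_right 0. \<forall>w. cmod (w - rep z0 e) \<le> rho e ^ N \<longrightarrow>
      w \<in> Om e \<and> cmod ((deriv ^^ Suc n) (fe e) w) \<le> inverse (rho e ^ N)"
    and lower: "\<And>i. i < n \<Longrightarrow> negligible rho (\<lambda>e. (deriv ^^ i) (fe e) (rep z0 e))"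
    and z: "z \<in> U" "z \<in> gball rho (rho_power rho (q + N + 1)) z0"
    and punctured: "glt rho (gzero rho) (gabs rho (gminus rho z z0))"
  shows "invertible_on rho {e \<in> {0<..1}. rho e ^ q < cmod ((deriv ^^ n) (fe e) (rep z0 e))} (f z)"
proof -
  have hol: "\<forall>e\<in>{0<..1}. open (Om e) \<and> fe e holomorphic_on Om e"
    using GH by (simp add: GH_rep_def)
  obtain p where "\<forall>\<^sub>F e in at_right 0.
      rho e ^ p < cmod (rep z e - rep z0 e) \<and> cmod (rep z e - rep z0 e) < rho e ^ (q + N + 1)"
    using punctured_rho_power_ball_bounds[OF g z0 Ctilde_rep[OF g z0] z(2) punctured] .
  then have dist: "\<forall>\<^sub>F e in at_right 0.
      rho e ^ p < cmod (rep z e - rep z0 e) \<and> cmod (rep z e - rep z0 e) \<le> rho e ^ (q + N + 1)"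
    by eventually_elim auto
  have "\<forall>\<^sub>F e in at_right 0. rho e ^ q < cmod ((deriv ^^ n) (fe e) (rep z0 e)) \<longrightarrow>
      rho e ^ (q + p * n + 1) < cmod (fe e (rep z e))"
    using GH_family_norm_gt_power[OF g hol N lower dist] by simp
  then have "\<forall>\<^sub>F e in at_right 0. e \<in> {e \<in> {0<..1}. rho e ^ q < cmod ((deriv ^^ n) (fe e) (rep z0 e))} \<longrightarrow>
      rho e ^ (q + p * n + 1) < cmod (fe e (rep z e))"
    by eventually_elim auto
  moreover have "(\<lambda>e. fe e (rep z e)) \<in> f z"
  proof -
    have zC: "z \<in> Ctilde rho" using z(2) by (simp add: gball_def)
    note at_z = GH_repD[OF GH z(1) Ctilde_rep[OF g zC]]
    show ?thesis using at_z(2) at_z(3)[of 0] gclass_self[OF g] by simp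
  qed
  ultimately show ?thesis
    unfolding invertible_on_def by (intro bexI[of _ "\<lambda>e. fe e (rep z e)"] exI[of _ "q + p * n + 1"])
qed

theorem theorem3p5:
  fixes rho :: "real \<Rightarrow> real"
    and U :: "(real \<Rightarrow> complex) set set"
    and z0 :: "(real \<Rightarrow> complex) set"
    and Om :: "real \<Rightarrow> complex set"
    and fe :: "real \<Rightarrow> complex \<Rightarrow> complex"
    and f :: "(real \<Rightarrow> complex) set \<Rightarrow> (real \<Rightarrow> complex) set"
  assumes "gauge rho"
    and "sharply_open rho U"
    and "z0 \<in> U"
    and "GH_rep rho U Om fe f"
    and "f z0 = gzero rho"
    and "\<exists>n::nat. n > 0 \<and> gderiv rho fe n z0 \<noteq> gzero rho"
  shows "\<exists>L r. subset0 L \<and> r \<in> Rpos rho \<and>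
           (\<forall>z\<in>gball rho r z0. glt rho (gzero rho) (gabs rho (gminus rho z z0))
               \<longrightarrow> invertible_on rho L (f z))"
proof -
  note g = assms(1) and GH = assms(4)
  have z0C: "z0 \<in> Ctilde rho" using assms(2,3) by (auto simp: sharply_open_def)
  obtain n where "\<not> negligible rho (\<lambda>e. (deriv ^^ n) (fe e) (rep z0 e))"
    and lower: "\<And>i. i < n \<Longrightarrow> negligible rho (\<lambda>e. (deriv ^^ i) (fe e) (rep z0 e))"
    using assms(6) GH_rep_least_nonnegligible_derivative[OF g GH assms(3) z0C] by metis
  then obtain q where q: "\<not> (\<forall>\<^sub>F e in at_right 0. cmod ((deriv ^^ n) (fe e) (rep z0 e)) \<le> rho e ^ q)"
    unfolding negligible_def by blast
  define L where "L = {e \<in> {0<..1}. rho e ^ q < cmod ((deriv ^^ n) (fe e) (rep z0 e))}"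
  have "subset0 L" using subset0_not_eventually[OF q] by (simp add: L_def not_le)
  obtain N where N: "\<forall>\<^sub>F e in at_right 0. \<forall>w. cmod (w - rep z0 e) \<le> rho e ^ N \<longrightarrow>
      w \<in> Om e \<and> cmod ((deriv ^^ Suc n) (fe e) w) \<le> inverse (rho e ^ N)"
    using GH_rep_derivative_bound_near[OF g GH assms(3) z0C Ctilde_rep[OF g z0C]] .
  obtain k where "gball rho (rho_power rho k) z0 \<subseteq> U"
    using sharply_open_contains_rho_power_ball[OF g assms(2,3)] .
  define r where "r = rho_power rho (max k (q + N + 1))"
  have "gball rho r z0 \<subseteq> U" "gball rho r z0 \<subseteq> gball rho (rho_power rho (q + N + 1)) z0"
    using gball_rho_power_antimono[OF g z0C] \<open>gball rho (rho_power rho k) z0 \<subseteq> U\<close>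
    unfolding r_def by (meson max.cobounded1 max.cobounded2 order_trans)+
  then have "\<forall>z\<in>gball rho r z0. glt rho (gzero rho) (gabs rho (gminus rho z z0)) \<longrightarrow>
      invertible_on rho L (f z)"
    using GH_rep_invertible_on_punctured_ball[OF g GH z0C N lower] unfolding L_def by blast
  then show ?thesis using \<open>subset0 L\<close> rho_power_Rpos[OF g] unfolding r_def by blast
qed

end
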